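(* Let $(N,M,W,C,P,\infty)$ be an MRS-situation with unbounded production and $(N,M,v)$ the corresponding MRS-game, and suppose $|M^o|\ge 2$. Then for every $y$ in the core of $(N,M,v)$, $y_j=0$ for all $j\in M$.
   Context: An MRS-situation $(N,M,W,C,P,\overline{Q})$ consists of a finite set $N$ of retailers and a finite set $M$ of suppliers (distinct agents), and: for each $j\in M$ a unit production cost $c_j:[0,\infty)\to(0,\infty)$, decreasing and continuous with $c_j(q)q$ nondecreasing, and a wholesale price $w_j:[0,\infty)\to(0,\infty)$, nonincreasing and continuous, with $w_j(q)>c_j(q)$ for all $q\ge0$ and $w_j(q)q$ nondecreasing; for each $i\in N$ a selling price $p_i:[0,\infty)\to\mathbb{R}$, nonincreasing and continuous, with $p_i(0)>w_j(0)$ for all $j$, and $q_i^*>0$ with $p_i(q_i^* )=0$; and capacities $\overline{q}_{ij}\in(0,\infty)$. Unbounded production, written $(N,M,W,C,P,\infty)$, means $\overline{q}_{ij}=K$ for all $i,j$ with $K$ large enough that capacities do not affect optimal solutions (e.g. $K\ge\max_i q_i^*$). For an order matrix $q=(q_{ij})_{i\in R,j\in M}\ge0$: $q_{Rj}=\sum_{i\in R}q_{ij}$, $q_{iM}=\sum_{j}q_{ij}$, $q_{RS}=\sum_{j\in S}\sum_{i\in R}q_{ij}$, $q_i=(q_{ij})_j$, $q_R=(q_{Rj})_j$; $c_S(x)=\min_{j\in S}c_j(x)$. For $i\in R$: $\Pi_i(q_i,\Psi^S(q_R))=p_i(q_{iM})q_{iM}-\sum_{j\in S}c_S(q_{RS})q_{ij}-\sum_{j\in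 M\setminus S}w_j(q_{Rj})q_{ij}$. $\mathbb{Q}^R=\{q\in\mathbb{R}_+^{R\times M}: q_{iM}\le q_i^*,\ q_{ij}\le\overline{q}_{ij}\}$; $q^{(R,S)}$ is an optimal solution of $\max\{\sum_{i\in R}\Pi_i(q_i,\Psi^S(q_R)):q\in\mathbb{Q}^R\}$. MRS-game on player set $N\cup M$: $v(R,S)=\sum_{i\in R}\Pi_i(q_i^{(R,S)},\Psi^S(q_R^{(R,S)}))$ for $\emptyset\ne R\subseteq N$, $S\subseteq M$, $v(\emptyset,S)=0$. Core: $\{x\in\mathbb{R}^{N\cup M}:\sum_{k\in N\cup M}x_k=v(N,M),\ \sum_{k\in R\cup S}x_k\ge v(R,S)\ \forall R\subseteq N,S\subseteq M\}$. A supplier $j$ is optimal if $v(N,M)=v(N,\{j\})$; $M^o$ is the set of optimal suppliers. *)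

theory Defs
  imports "HOL-Analysis.Analysis"
begin

text \<open>Agents (retailers and suppliers) live in a common type 'a.
  Order matrices are functions q :: 'a \<Rightarrow> 'a \<Rightarrow> real, q i j = q_ij.\<close>

definition MRS_situation ::
  "'a set \<Rightarrow> 'a set \<Rightarrow> ('a \<Rightarrow> real \<Rightarrow> real) \<Rightarrow> ('a \<Rightarrow> real \<Rightarrow> real)
   \<Rightarrow> ('a \<Rightarrow> real \<Rightarrow> real) \<Rightarrow> ('a \<Rightarrow> real) \<Rightarrow> bool" where
  "MRS_situation N M w c p qs \<longleftrightarrow>
     finite N \<and> finite M \<and> N \<inter> M = {} \<and>
     (\<forall>j\<in>M.
        (\<forall>x\<ge>0. c j x > 0) \<and>
        (\<forall>x y. 0 \<le> x \<longrightarrow> x < y \<longrightarrow> c j y < c j x) \<and>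
        continuous_on {0..} (c j) \<and>
        (\<forall>x y. 0 \<le> x \<longrightarrow> x \<le> y \<longrightarrow> c j x * x \<le> c j y * y) \<and>
        (\<forall>x\<ge>0. w j x > 0) \<and>
        (\<forall>x y. 0 \<le> x \<longrightarrow> x \<le> y \<longrightarrow> w j y \<le> w j x) \<and>
        continuous_on {0..} (w j) \<and>
        (\<forall>x\<ge>0. w j x > c j x) \<and>
        (\<forall>x y. 0 \<le> x \<longrightarrow> x \<le> y \<longrightarrow> w j x * x \<le> w j y * y)) \<and>
     (\<forall>i\<in>N.
        (\<forall>x y. 0 \<le> x \<longrightarrow> x \<le> y \<longrightarrow> p i y \<le> p i x) \<and>
        continuous_on {0..} (p i) \<and>
        (\<forall>j\<in>M. p i 0 > w j 0) \<and>
        qs i > 0 \<and> p i (qs i) = 0)"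

definition cS :: "('a \<Rightarrow> real \<Rightarrow> real) \<Rightarrow> 'a set \<Rightarrow> real \<Rightarrow> real" where
  "cS c S x = Min ((\<lambda>j. c j x) ` S)"

definition profit ::
  "'a set \<Rightarrow> ('a \<Rightarrow> real \<Rightarrow> real) \<Rightarrow> ('a \<Rightarrow> real \<Rightarrow> real) \<Rightarrow> ('a \<Rightarrow> real \<Rightarrow> real)
   \<Rightarrow> 'a set \<Rightarrow> 'a set \<Rightarrow> ('a \<Rightarrow> 'a \<Rightarrow> real) \<Rightarrow> 'a \<Rightarrow> real" where
  "profit M w c p R S q i =
     p i (\<Sum>j\<in>M. q i j) * (\<Sum>j\<in>M. q i j)
     - (\<Sum>j\<in>S. cS c S (\<Sum>j'\<in>S. \<Sum>i'\<in>R. q i' j') * q i j)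
     - (\<Sum>j\<in>M - S. w j (\<Sum>i'\<in>R. q i' j) * q i j)"

definition feasible ::
  "'a set \<Rightarrow> ('a \<Rightarrow> real) \<Rightarrow> ('a \<Rightarrow> 'a \<Rightarrow> real) \<Rightarrow> 'a set \<Rightarrow> ('a \<Rightarrow> 'a \<Rightarrow> real) set" where
  "feasible M qs cap R =
     {q. (\<forall>i j. (i \<notin> R \<or> j \<notin> M) \<longrightarrow> q i j = 0) \<and>
         (\<forall>i\<in>R. \<forall>j\<in>M. 0 \<le> q i j \<and> q i j \<le> cap i j) \<and>
         (\<forall>i\<in>R. (\<Sum>j\<in>M. q i j) \<le> qs i)}"

text \<open>MRS-game: v(R,S) = optimal total profit of R (value of an optimal
  solution q^(R,S), i.e. the maximum), v(\<emptyset>,S) = 0.\<close>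
definition mrs_game ::
  "'a set \<Rightarrow> ('a \<Rightarrow> real \<Rightarrow> real) \<Rightarrow> ('a \<Rightarrow> real \<Rightarrow> real) \<Rightarrow> ('a \<Rightarrow> real \<Rightarrow> real)
   \<Rightarrow> ('a \<Rightarrow> real) \<Rightarrow> ('a \<Rightarrow> 'a \<Rightarrow> real) \<Rightarrow> 'a set \<Rightarrow> 'a set \<Rightarrow> real" where
  "mrs_game M w c p qs cap R S =
     (if R = {} then 0
      else Sup ((\<lambda>q. \<Sum>i\<in>R. profit M w c p R S q i) ` feasible M qs cap R))"

definition core :: "'a set \<Rightarrow> 'a set \<Rightarrow> ('a set \<Rightarrow> 'a set \<Rightarrow> real) \<Rightarrow> ('a \<Rightarrow> real) set" where
  "core N M v = {x. (\<Sum>k\<in>N \<union> M. x k) = v N M \<and>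
                    (\<forall>R\<subseteq>N. \<forall>S\<subseteq>M. (\<Sum>k\<in>R \<union> S. x k) \<ge> v R S)}"

definition optimal_suppliers :: "'a set \<Rightarrow> 'a set \<Rightarrow> ('a set \<Rightarrow> 'a set \<Rightarrow> real) \<Rightarrow> 'a set" where
  "optimal_suppliers N M v = {j\<in>M. v N M = v N {j}}"

end

theory Submission
  imports Defs
begin

text \<open>The argument uses only the core inequalities. Since a coalition consisting of suppliers
  alone earns nothing, every supplier gets a nonnegative payoff. If \<open>j\<close> is optimal, the
  coalition \<open>N \<union> {j}\<close> already earns \<open>v(N,M)\<close>, so \<open>y j\<close> alone must be at least the total
  payoff of all suppliers; hence every supplier other than \<open>j\<close> gets nothing. With two distinct
  optimal suppliers, every supplier differs from one of them.\<close>

lemma core_supplier_nonneg: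
  assumes "y \<in> core N M v" and "k \<in> M" and "0 \<le> v {} {k}"
  shows "0 \<le> y k"
  using assms unfolding core_def by force

lemma core_sum_suppliers_le_optimal:
  assumes "finite N" "finite M" "N \<inter> M = {}"
    and "y \<in> core N M v" and "j \<in> optimal_suppliers N M v"
  shows "(\<Sum>k\<in>M. y k) \<le> y j"
proof -
  have "j \<in> M" and optimal: "v N M = v N {j}"
    using assms(5) unfolding optimal_suppliers_def by auto
  with assms(3) have "j \<notin> N" by auto
  have "(\<Sum>k\<in>N. y k) + (\<Sum>k\<in>M. y k) = v N M"
    using assms(1-4) by (simp add: core_def sum.union_disjoint)
  also have "\<dots> = v N {j}" by (rule optimal)
  also have "\<dots> \<le> (\<Sum>k\<in>N \<union> {j}. y k)"
    using assms(4) \<open>j \<in> M\<close> unfolding core_def by blast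
  also have "\<dots> = (\<Sum>k\<in>N. y k) + y j"
    using assms(1) \<open>j \<notin> N\<close> by simp
  finally show ?thesis by simp
qed

lemma core_other_supplier_zero:
  assumes "finite N" "finite M" "N \<inter> M = {}"
    and "y \<in> core N M v" and "\<And>k. k \<in> M \<Longrightarrow> 0 \<le> v {} {k}"
    and "j \<in> optimal_suppliers N M v" and "k \<in> M" "k \<noteq> j"
  shows "y k = 0"
proof -
  have "j \<in> M" using assms(6) unfolding optimal_suppliers_def by auto
  have nonneg: "\<forall>k\<in>M - {j}. 0 \<le> y k"
    using core_supplier_nonneg[OF assms(4)] assms(5) by blast
  have "(\<Sum>k\<in>M. y k) = y j + (\<Sum>k\<in>M - {j}. y k)"
    using assms(2) \<open>j \<in> M\<close> by (simp add: sum.remove)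
  moreover have "0 \<le> (\<Sum>k\<in>M - {j}. y k)"
    using nonneg by (intro sum_nonneg) auto
  ultimately have "(\<Sum>k\<in>M - {j}. y k) = 0"
    using core_sum_suppliers_le_optimal[OF assms(1-4,6)] by linarith
  then have "\<forall>k\<in>M - {j}. y k = 0"
    using sum_nonneg_eq_0_iff[of "M - {j}" y] assms(2) nonneg by blast
  with assms(7,8) show ?thesis by blast
qed

theorem theorem3:
  fixes N M :: "'a set" and w c p :: "'a \<Rightarrow> real \<Rightarrow> real" and qs :: "'a \<Rightarrow> real" and K :: real
    and y :: "'a \<Rightarrow> real"
  assumes "MRS_situation N M w c p qs"
    and "K > 0" and "\<forall>i\<in>N. qs i \<le> K"
    and "card (optimal_suppliers N M (mrs_game M w c p qs (\<lambda>_ _. K))) \<ge> 2"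
    and "y \<in> core N M (mrs_game M w c p qs (\<lambda>_ _. K))"
  shows "\<forall>j\<in>M. y j = 0"
proof
  let ?v = "mrs_game M w c p qs (\<lambda>_ _. K)"
  fix k assume "k \<in> M"
  have finite: "finite N" "finite M" "N \<inter> M = {}"
    using assms(1) unfolding MRS_situation_def by auto
  have "\<And>k. 0 \<le> ?v {} {k}" by (simp add: mrs_game_def)
  note other_zero = core_other_supplier_zero[OF finite assms(5) this _ \<open>k \<in> M\<close>]
  obtain j1 j2 where "j1 \<in> optimal_suppliers N M ?v" "j2 \<in> optimal_suppliers N M ?v" "j1 \<noteq> j2"
    using assms(4) card_le_Suc0_iff_eq[of "optimal_suppliers N M ?v"]
    by (metis card.infinite not_less_eq_eq numeral_2_eq_2 zero_le)
  then show "y k = 0"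
    using other_zero by (cases "k = j1") auto
qed

end
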